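(* Consider the symmetric two-player two-action game with payoffs $a/a$ for (1,1), $b/c$ for (1,2), $c/b$ for (2,1), $d/d$ for (2,2), satisfying the Prisoner's Dilemma condition $c>a>d>b$. Then the projected SA-IGA self-play dynamics on $[0,1]^4$ in the variables $(p_1,p_2,w_1,w_2)$ has two types of stable equilibrium points: (1) $(0,0,w_1^*,w_2^* )$, whenever $w_1^*,w_2^*\in[0,1]$ and $w_1^*,w_2^*<\min\left\{\frac{2(c-a)}{c-b},\frac{2(d-b)}{c-b}\right\}$; (2) $(1,1,w_1^*,w_2^* )$, whenever $w_1^*,w_2^*\in[0,1]$ and $w_1^*,w_2^*>\max\left\{\frac{2(c-a)}{c-b},\frac{2(d-b)}{c-b}\right\}$.
   Context: Player $i\in\{1,2\}$ plays action 1 with probability $p_i\in[0,1]$. With $r_i^{11}=a,r_i^{12}=b,r_i^{21}=c,r_i^{22}=d$ (payoff to $i$ when $i$ plays the first index and the opponent $-i$ the second), the expected payoff is $V_i=\sum_{j,k}\pi_i(j)\pi_{-i}(k)r_i^{jk}$ with $\pi_i(1)=p_i,\pi_i(2)=1-p_i$; $V^{soc}=\frac12(V_1+V_2)$; player $i$'s overall payoff is $\tilde V_i=(1-w_i)V_i+w_iV^{soc}$ with social attitude $w_i\in[0,1]$. The unconstrained SA-IGA vector field $F$ on $x=(p_1,p_2,w_1,w_2)$ is $F_{p_i}=\partial\tilde V_i/\partial p_i$ and $F_{w_i}=\varepsilon(V_i-V^{soc})$ for a constant $\varepsilon>0$; for this game $F_{p_i}=u\,p_{-i}+\frac{c-b}{2}w_i+b-d$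 with $u=a+d-b-c$, and $F_{w_i}=\frac{\varepsilon}{2}(b-c)(p_i-p_{-i})$. The projected dynamics on $[0,1]^4$ is $\dot x_j=F_j(x)$ for each coordinate, except that $\dot x_j=0$ whenever $x_j=0$ and $F_j(x)<0$, or $x_j=1$ and $F_j(x)>0$. An equilibrium point is a point where the projected vector field vanishes; it is stable if for every $\eta>0$ there is $\delta>0$ such that every trajectory starting within distance $\delta$ of it stays within distance $\eta$ of it for all future time. *)

theory Defs
  imports "HOL-Analysis.Analysis"
begin

text \<open>State x = (p1, p2, w1, w2) in real \<times> real \<times> real \<times> real (Euclidean distance).
  Symmetric game: r^11 = a, r^12 = b, r^21 = c, r^22 = d for both players.\<close>

type_synonym state = "real \<times> real \<times> real \<times> real"

definition sa_box :: "state set" where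
  "sa_box = {0..1} \<times> {0..1} \<times> {0..1} \<times> {0..1}"

definition sa_F :: "real \<Rightarrow> real \<Rightarrow> real \<Rightarrow> real \<Rightarrow> real \<Rightarrow> state \<Rightarrow> state" where
  "sa_F a b c d eps x = (case x of (p1, p2, w1, w2) \<Rightarrow>
     let u = a + d - b - c in
     (u * p2 + (c - b) / 2 * w1 + b - d,
      u * p1 + (c - b) / 2 * w2 + b - d,
      eps / 2 * (b - c) * (p1 - p2),
      eps / 2 * (b - c) * (p2 - p1)))"

definition clip :: "real \<Rightarrow> real \<Rightarrow> real" where
  "clip y f = (if (y = 0 \<and> f < 0) \<or> (y = 1 \<and> f > 0) then 0 else f)"

definition sa_PF :: "real \<Rightarrow> real \<Rightarrow> real \<Rightarrow> real \<Rightarrow> real \<Rightarrow> state \<Rightarrow> state" where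
  "sa_PF a b c d eps x = (case x of (p1, p2, w1, w2) \<Rightarrow>
     (case sa_F a b c d eps x of (f1, f2, f3, f4) \<Rightarrow>
       (clip p1 f1, clip p2 f2, clip w1 f3, clip w2 f4)))"

definition sa_trajectory :: "real \<Rightarrow> real \<Rightarrow> real \<Rightarrow> real \<Rightarrow> real \<Rightarrow> (real \<Rightarrow> state) \<Rightarrow> bool" where
  "sa_trajectory a b c d eps x \<longleftrightarrow>
     (\<forall>t\<ge>0. x t \<in> sa_box) \<and> continuous_on {0..} x \<and>
     (\<forall>t\<ge>0. (x has_vector_derivative sa_PF a b c d eps (x t)) (at t within {t..}))"

definition sa_equilibrium :: "real \<Rightarrow> real \<Rightarrow> real \<Rightarrow> real \<Rightarrow> real \<Rightarrow> state \<Rightarrow> bool" where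
  "sa_equilibrium a b c d eps xs \<longleftrightarrow> xs \<in> sa_box \<and> sa_PF a b c d eps xs = 0"

definition sa_stable :: "real \<Rightarrow> real \<Rightarrow> real \<Rightarrow> real \<Rightarrow> real \<Rightarrow> state \<Rightarrow> bool" where
  "sa_stable a b c d eps xs \<longleftrightarrow>
     (\<forall>\<eta>>0. \<exists>\<delta>>0. \<forall>x. sa_trajectory a b c d eps x \<and> dist (x 0) xs < \<delta> \<longrightarrow>
        (\<forall>t\<ge>0. dist (x t) xs < \<eta>))"

end

theory Submission
  imports Defs
begin

text \<open>Near \<open>(0, 0, w\<^sub>1, w\<^sub>2)\<close> the social weights keep \<open>(c - b)/2 \<cdot> w\<^sub>i + b - d\<close> negative,
  so each \<open>p\<^sub>i > 0\<close> is pushed towards \<open>0\<close> at a rate at least some \<open>\<kappa> > 0\<close>, while each \<open>w\<^sub>i\<close>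
  moves at speed at most \<open>\<epsilon>(c - b)/2 \<cdot> \<bar>p\<^sub>1 - p\<^sub>2\<bar>\<close>. In a small box this speed is dominated
  by \<open>\<epsilon>\<close> times the decay rate of \<open>p\<^sub>1 + p\<^sub>2\<close>, so \<open>\<plusminus>w\<^sub>i + \<epsilon>(p\<^sub>1 + p\<^sub>2)\<close> are Lyapunov functions
  there, and a first-exit argument shows that trajectories starting close enough never leave
  the box. The points \<open>(1, 1, w\<^sub>1, w\<^sub>2)\<close> reduce to this case: the reflection \<open>x \<mapsto> 1 - x\<close>
  conjugates the projected dynamics to that of the game with payoffs
  \<open>(d + (c - b)/2, b, c, a - (c - b)/2)\<close> and maps them to \<open>(0, 0, 1 - w\<^sub>1, 1 - w\<^sub>2)\<close>.\<close>

lemma nonincreasing_if_right_derivative_nonpos: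
  fixes f f' :: "real \<Rightarrow> real"
  assumes "a \<le> b" and cont: "continuous_on {a..b} f"
    and der: "\<And>t. a \<le> t \<Longrightarrow> t < b \<Longrightarrow> (f has_real_derivative f' t) (at t within {t..})"
    and nonpos: "\<And>t. a \<le> t \<Longrightarrow> t < b \<Longrightarrow> f' t \<le> 0"
  shows "f b \<le> f a"
proof (rule ccontr)
  assume "\<not> f b \<le> f a"
  then have "f a < f b" "a \<noteq> b" by auto
  with \<open>a \<le> b\<close> have "a < b" by simp
  define e where "e = (f b - f a) / (2 * (b - a))"
  have "e > 0" using \<open>a < b\<close> \<open>f a < f b\<close> by (simp add: e_def)
  \<comment> \<open>The last point where \<open>g\<close> is still \<open>\<le> 0\<close> cannot exist: right after it \<open>g\<close> decreases.\<close>
  define g where "g t = f t - f a - e * (t - a)" for t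
  have "e * (b - a) = (f b - f a) / 2"
    using \<open>a < b\<close> by (simp add: e_def field_simps)
  then have "g b > 0"
    using \<open>f a < f b\<close> by (simp add: g_def)
  define Z where "Z = {a..b} \<inter> g -` {..0}"
  have "continuous_on {a..b} g"
    unfolding g_def by (intro continuous_intros cont)
  then have "closed Z"
    unfolding Z_def by (rule continuous_closed_preimage) simp_all
  moreover have "bounded Z"
    unfolding Z_def by (rule bounded_Int) simp
  ultimately have "compact Z"
    by (simp add: compact_eq_bounded_closed)
  moreover have "a \<in> Z" using \<open>a \<le> b\<close> by (simp add: Z_def g_def)
  ultimately obtain m where "m \<in> Z" and m_max: "\<And>y. y \<in> Z \<Longrightarrow> y \<le> m"
    using compact_attains_sup[of Z] by blast
  then have "a \<le> m" "m \<le> b" "g m \<le> 0" by (simp_all add: Z_def)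
  with \<open>g b > 0\<close> have "m < b" by (cases "m = b") simp_all
  have "((\<lambda>y. (f y - f m) / (y - m)) \<longlongrightarrow> f' m) (at m within {m..})"
    using der[OF \<open>a \<le> m\<close> \<open>m < b\<close>] by (simp add: has_field_derivative_iff)
  moreover have "f' m < f' m + e" using \<open>e > 0\<close> by simp
  ultimately have "eventually (\<lambda>y. (f y - f m) / (y - m) < f' m + e) (at m within {m..})"
    by (rule order_tendstoD(2))
  then obtain r where "r > 0" and r:
    "\<And>y. y \<in> {m..} \<Longrightarrow> y \<noteq> m \<Longrightarrow> dist y m < r \<Longrightarrow> (f y - f m) / (y - m) < f' m + e"
    unfolding eventually_at by blast
  obtain h where "0 < h" "h < r" "h \<le> b - m"
    using \<open>r > 0\<close> \<open>m < b\<close> by (intro that[of "min r (b - m) / 2"]) auto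
  define y where "y = m + h"
  have "m < y" "y \<le> b" "dist y m < r"
    using \<open>0 < h\<close> \<open>h < r\<close> \<open>h \<le> b - m\<close> by (simp_all add: y_def dist_real_def)
  then have "(f y - f m) / (y - m) < f' m + e"
    by (intro r) simp_all
  then have "f y - f m < (f' m + e) * (y - m)"
    using \<open>m < y\<close> by (simp add: pos_divide_less_eq)
  also have "\<dots> \<le> e * (y - m)"
    using nonpos[OF \<open>a \<le> m\<close> \<open>m < b\<close>] \<open>m < y\<close> by (intro mult_right_mono) simp_all
  finally have "f y - f m < e * (y - m)" .
  moreover have "g y - g m = f y - f m - e * (y - m)"
    by (simp add: g_def algebra_simps)
  ultimately have "g y \<le> 0" using \<open>g m \<le> 0\<close> by linarith
  with \<open>a \<le> m\<close> \<open>m < y\<close> \<open>y \<le> b\<close> have "y \<in> Z" by (simp add: Z_def)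
  then have "y \<le> m" by (rule m_max)
  with \<open>m < y\<close> show False by simp
qed

lemma abs_diff_le_if_right_derivative_dominated:
  fixes V W dV dW :: "real \<Rightarrow> real"
  assumes "a \<le> b" and cont: "continuous_on {a..b} V" "continuous_on {a..b} W"
    and der: "\<And>t. a \<le> t \<Longrightarrow> t < b \<Longrightarrow> (V has_real_derivative dV t) (at t within {t..})"
      "\<And>t. a \<le> t \<Longrightarrow> t < b \<Longrightarrow> (W has_real_derivative dW t) (at t within {t..})"
    and dominated: "\<And>t. a \<le> t \<Longrightarrow> t < b \<Longrightarrow> \<bar>dW t\<bar> \<le> - dV t"
  shows "\<bar>W b - W a\<bar> \<le> V a - V b"
proof -
  have "V b + W b \<le> V a + W a"
  proof (rule nonincreasing_if_right_derivative_nonpos[OF \<open>a \<le> b\<close>])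
    show "continuous_on {a..b} (\<lambda>t. V t + W t)"
      using cont by (rule continuous_on_add)
    show "((\<lambda>t. V t + W t) has_real_derivative dV t + dW t) (at t within {t..})"
      if "a \<le> t" "t < b" for t
      using der[OF that] by (rule DERIV_add)
    show "dV t + dW t \<le> 0" if "a \<le> t" "t < b" for t
      using dominated[OF that] by linarith
  qed
  moreover have "V b - W b \<le> V a - W a"
  proof (rule nonincreasing_if_right_derivative_nonpos[OF \<open>a \<le> b\<close>])
    show "continuous_on {a..b} (\<lambda>t. V t - W t)"
      using cont by (rule continuous_on_diff)
    show "((\<lambda>t. V t - W t) has_real_derivative dV t - dW t) (at t within {t..})"
      if "a \<le> t" "t < b" for t
      using der[OF that] by (rule DERIV_diff)
    show "dV t - dW t \<le> 0" if "a \<le> t" "t < b" for t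
      using dominated[OF that] by linarith
  qed
  ultimately show ?thesis by linarith
qed

lemma mem_if_no_first_exit:
  fixes x :: "real \<Rightarrow> 'a::topological_space"
  assumes "continuous_on {0..} x" "open U"
    and no_exit: "\<And>m. 0 \<le> m \<Longrightarrow> (\<And>s. 0 \<le> s \<Longrightarrow> s < m \<Longrightarrow> x s \<in> U) \<Longrightarrow> x m \<in> U"
    and "0 \<le> t"
  shows "x t \<in> U"
proof (rule ccontr)
  assume "x t \<notin> U"
  define Z where "Z = {0..t} \<inter> x -` (- U)"
  have "continuous_on {0..t} x"
    using assms(1) by (rule continuous_on_subset) auto
  then have "closed Z"
    unfolding Z_def using \<open>open U\<close> by (intro continuous_closed_preimage) auto
  moreover have "bounded Z"
    unfolding Z_def by (rule bounded_Int) simp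
  ultimately have "compact Z"
    by (simp add: compact_eq_bounded_closed)
  moreover have "t \<in> Z" using \<open>0 \<le> t\<close> \<open>x t \<notin> U\<close> by (simp add: Z_def)
  ultimately obtain m where "m \<in> Z" and m_min: "\<And>s. s \<in> Z \<Longrightarrow> m \<le> s"
    using compact_attains_inf[of Z] by blast
  have "x m \<in> U"
  proof (rule no_exit)
    show "0 \<le> m" using \<open>m \<in> Z\<close> by (simp add: Z_def)
    show "x s \<in> U" if "0 \<le> s" "s < m" for s
    proof (rule ccontr)
      assume "x s \<notin> U"
      with that \<open>m \<in> Z\<close> have "s \<in> Z" by (simp add: Z_def)
      then have "m \<le> s" by (rule m_min)
      with \<open>s < m\<close> show False by simp
    qed
  qed
  with \<open>m \<in> Z\<close> show False by (simp add: Z_def)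
qed

lemma has_real_derivative_components:
  fixes P1 P2 V1 V2 :: "real \<Rightarrow> real"
  assumes "((\<lambda>t. (P1 t, P2 t, V1 t, V2 t)) has_vector_derivative (f1, f2, g1, g2)) F"
  shows "(P1 has_real_derivative f1) F" "(P2 has_real_derivative f2) F"
    and "(V1 has_real_derivative g1) F" "(V2 has_real_derivative g2) F"
proof -
  have snd: "((\<lambda>t. (P2 t, V1 t, V2 t)) has_vector_derivative (f2, g1, g2)) F"
    and snd2: "((\<lambda>t. (V1 t, V2 t)) has_vector_derivative (g1, g2)) F"
    using bounded_linear.has_vector_derivative[OF bounded_linear_snd assms]
      bounded_linear.has_vector_derivative[OF bounded_linear_snd
        bounded_linear.has_vector_derivative[OF bounded_linear_snd assms]]
    by simp_all
  show "(P1 has_real_derivative f1) F"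
    using bounded_linear.has_vector_derivative[OF bounded_linear_fst assms]
    by (simp add: has_real_derivative_iff_has_vector_derivative)
  show "(P2 has_real_derivative f2) F"
    using bounded_linear.has_vector_derivative[OF bounded_linear_fst snd]
    by (simp add: has_real_derivative_iff_has_vector_derivative)
  show "(V1 has_real_derivative g1) F"
    using bounded_linear.has_vector_derivative[OF bounded_linear_fst snd2]
    by (simp add: has_real_derivative_iff_has_vector_derivative)
  show "(V2 has_real_derivative g2) F"
    using bounded_linear.has_vector_derivative[OF bounded_linear_snd snd2]
    by (simp add: has_real_derivative_iff_has_vector_derivative)
qed

lemma dist_Pair_le: "dist (a, b) (c, d) \<le> dist a c + dist b d"
  using sqrt_sum_squares_le_sum_abs[of "dist a c" "dist b d"] by (simp add: dist_Pair_Pair)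

lemma dist_state_le:
  fixes p1 p2 v1 v2 q1 q2 z1 z2 :: real
  shows "dist (p1, p2, v1, v2) (q1, q2, z1, z2) \<le> \<bar>p1 - q1\<bar> + \<bar>p2 - q2\<bar> + \<bar>v1 - z1\<bar> + \<bar>v2 - z2\<bar>"
proof -
  have "dist (p1, p2, v1, v2) (q1, q2, z1, z2) \<le> dist p1 q1 + dist (p2, v1, v2) (q2, z1, z2)"
    by (rule dist_Pair_le)
  also have "dist (p2, v1, v2) (q2, z1, z2) \<le> dist p2 q2 + dist (v1, v2) (z1, z2)"
    by (rule dist_Pair_le)
  also have "dist (v1, v2) (z1, z2) \<le> dist v1 z1 + dist v2 z2"
    by (rule dist_Pair_le)
  finally show ?thesis by (simp add: dist_real_def add.assoc)
qed

lemma abs_less_if_dist_state_less: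
  fixes p1 p2 v1 v2 q1 q2 z1 z2 :: real
  assumes "dist (p1, p2, v1, v2) (q1, q2, z1, z2) < r"
  shows "\<bar>p1 - q1\<bar> < r" "\<bar>p2 - q2\<bar> < r" "\<bar>v1 - z1\<bar> < r" "\<bar>v2 - z2\<bar> < r"
  using assms dist_fst_le[of "(p1, p2, v1, v2)" "(q1, q2, z1, z2)"]
    dist_snd_le[of "(p1, p2, v1, v2)" "(q1, q2, z1, z2)"]
    dist_fst_le[of "(p2, v1, v2)" "(q2, z1, z2)"] dist_snd_le[of "(p2, v1, v2)" "(q2, z1, z2)"]
    dist_fst_le[of "(v1, v2)" "(z1, z2)"] dist_snd_le[of "(v1, v2)" "(z1, z2)"]
  by (simp_all add: dist_real_def)

lemma sa_PF_eq:
  "sa_PF a b c d eps (p1, p2, v1, v2) =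
    (clip p1 ((a + d - b - c) * p2 + (c - b) / 2 * v1 + b - d),
     clip p2 ((a + d - b - c) * p1 + (c - b) / 2 * v2 + b - d),
     clip v1 (eps / 2 * (b - c) * (p1 - p2)), clip v2 (eps / 2 * (b - c) * (p2 - p1)))"
  by (simp add: sa_PF_def sa_F_def Let_def)

lemma abs_clip_le: "\<bar>clip y f\<bar> \<le> \<bar>f\<bar>"
  by (simp add: clip_def)

lemma clip_le_if_le_neg:
  assumes "f \<le> - \<kappa>" "0 \<le> \<kappa>"
  shows "clip y f \<le> 0" "0 < y \<Longrightarrow> clip y f \<le> - \<kappa>"
  using assms by (auto simp: clip_def)

lemma sa_PF_near_origin:
  fixes a b c d eps \<kappa> \<rho> p1 p2 v1 v2 w1 w2 :: real
  assumes "b < c" "0 \<le> eps"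
    and margin: "(c - b) / 2 * w1 + b - d \<le> - 2 * \<kappa>" "(c - b) / 2 * w2 + b - d \<le> - 2 * \<kappa>"
    and radius: "(\<bar>a + d - b - c\<bar> + (c - b) / 2) * \<rho> \<le> \<kappa>"
    and near: "0 \<le> p1" "p1 \<le> \<rho>" "0 \<le> p2" "p2 \<le> \<rho>" "\<bar>v1 - w1\<bar> \<le> \<rho>" "\<bar>v2 - w2\<bar> \<le> \<rho>"
    and F: "sa_PF a b c d eps (p1, p2, v1, v2) = (f1, f2, g1, g2)"
  shows "f1 \<le> 0" "f2 \<le> 0" "\<bar>g1\<bar> \<le> eps * - (f1 + f2)" "\<bar>g2\<bar> \<le> eps * - (f1 + f2)"
proof -
  define u where "u = a + d - b - c"
  define k where "k = (c - b) / 2"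
  have F_eq: "f1 = clip p1 (u * p2 + k * v1 + b - d)" "f2 = clip p2 (u * p1 + k * v2 + b - d)"
    "g1 = clip v1 (eps / 2 * (b - c) * (p1 - p2))" "g2 = clip v2 (eps / 2 * (b - c) * (p2 - p1))"
    using F by (simp_all add: sa_PF_eq u_def k_def)
  have "0 < k" "0 \<le> \<rho>" using \<open>b < c\<close> near by (auto simp: k_def)
  have radius': "\<bar>u\<bar> * \<rho> + k * \<rho> \<le> \<kappa>"
    using radius by (simp add: u_def k_def distrib_right)
  moreover have "0 \<le> \<bar>u\<bar> * \<rho>" "0 \<le> k * \<rho>"
    using \<open>0 < k\<close> \<open>0 \<le> \<rho>\<close> by simp_all
  ultimately have "k * \<rho> \<le> \<kappa>" "0 \<le> \<kappa>" by linarith+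
  have field_neg: "u * p + k * v + b - d \<le> - \<kappa>"
    if "0 \<le> p" "p \<le> \<rho>" "\<bar>v - w\<bar> \<le> \<rho>" "k * w + b - d \<le> - 2 * \<kappa>" for p v w
  proof -
    have "u * p \<le> \<bar>u\<bar> * p"
      using abs_ge_self that(1) by (rule mult_right_mono)
    also have "\<dots> \<le> \<bar>u\<bar> * \<rho>"
      using that(2) abs_ge_zero by (rule mult_left_mono)
    finally have "u * p \<le> \<bar>u\<bar> * \<rho>" .
    moreover have "k * v \<le> k * (w + \<rho>)"
      using that(3) \<open>0 < k\<close> by (intro mult_left_mono) auto
    ultimately show ?thesis using that(4) radius' by (simp add: distrib_left)
  qed
  have f1: "f1 \<le> 0" "0 < p1 \<Longrightarrow> f1 \<le> - \<kappa>"
    unfolding F_eq using clip_le_if_le_neg[OF field_neg[OF near(3,4,5)] \<open>0 \<le> \<kappa>\<close>] margin(1)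
    by (simp_all add: k_def)
  have f2: "f2 \<le> 0" "0 < p2 \<Longrightarrow> f2 \<le> - \<kappa>"
    unfolding F_eq using clip_le_if_le_neg[OF field_neg[OF near(1,2,6)] \<open>0 \<le> \<kappa>\<close>] margin(2)
    by (simp_all add: k_def)
  have "\<bar>eps / 2 * (b - c) * z\<bar> = eps * (k * \<bar>z\<bar>)" for z
    using \<open>b < c\<close> \<open>0 \<le> eps\<close> by (simp add: k_def abs_mult)
  then have g: "\<bar>g1\<bar> \<le> eps * (k * \<bar>p1 - p2\<bar>)" "\<bar>g2\<bar> \<le> eps * (k * \<bar>p1 - p2\<bar>)"
    unfolding F_eq by (metis abs_clip_le abs_minus_commute)+
  have "k * \<bar>p1 - p2\<bar> \<le> - (f1 + f2)"
  proof (cases "p1 = 0 \<and> p2 = 0")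
    case True
    then show ?thesis using f1 f2 by simp
  next
    case False
    then have "\<kappa> \<le> - (f1 + f2)" using f1 f2 near by force
    moreover have "k * \<bar>p1 - p2\<bar> \<le> k * \<rho>"
      using near \<open>0 < k\<close> by (intro mult_left_mono) auto
    ultimately show ?thesis using \<open>k * \<rho> \<le> \<kappa>\<close> by linarith
  qed
  then have "eps * (k * \<bar>p1 - p2\<bar>) \<le> eps * - (f1 + f2)"
    using \<open>0 \<le> eps\<close> by (rule mult_left_mono)
  with f1 f2 g show "f1 \<le> 0" "f2 \<le> 0" "\<bar>g1\<bar> \<le> eps * - (f1 + f2)" "\<bar>g2\<bar> \<le> eps * - (f1 + f2)"
    by linarith+
qed

lemma sa_trajectory_coordinates:
  assumes traj: "sa_trajectory a b c d eps x"
  obtains P1 P2 V1 V2 f1 f2 g1 g2 :: "real \<Rightarrow> real"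
  where "x = (\<lambda>t. (P1 t, P2 t, V1 t, V2 t))"
    and "\<And>t. sa_PF a b c d eps (x t) = (f1 t, f2 t, g1 t, g2 t)"
    and "continuous_on {0..} P1" "continuous_on {0..} P2"
    and "continuous_on {0..} V1" "continuous_on {0..} V2"
    and "\<And>t. 0 \<le> t \<Longrightarrow> (P1 has_real_derivative f1 t) (at t within {t..})"
    and "\<And>t. 0 \<le> t \<Longrightarrow> (P2 has_real_derivative f2 t) (at t within {t..})"
    and "\<And>t. 0 \<le> t \<Longrightarrow> (V1 has_real_derivative g1 t) (at t within {t..})"
    and "\<And>t. 0 \<le> t \<Longrightarrow> (V2 has_real_derivative g2 t) (at t within {t..})"
proof -
  define P1 where "P1 t = fst (x t)" for t
  define P2 where "P2 t = fst (snd (x t))" for t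
  define V1 where "V1 t = fst (snd (snd (x t)))" for t
  define V2 where "V2 t = snd (snd (snd (x t)))" for t
  have x_eq: "x = (\<lambda>t. (P1 t, P2 t, V1 t, V2 t))"
    by (simp add: fun_eq_iff P1_def P2_def V1_def V2_def)
  define f1 where "f1 t = fst (sa_PF a b c d eps (x t))" for t
  define f2 where "f2 t = fst (snd (sa_PF a b c d eps (x t)))" for t
  define g1 where "g1 t = fst (snd (snd (sa_PF a b c d eps (x t))))" for t
  define g2 where "g2 t = snd (snd (snd (sa_PF a b c d eps (x t))))" for t
  have F: "sa_PF a b c d eps (x t) = (f1 t, f2 t, g1 t, g2 t)" for t
    by (simp add: f1_def f2_def g1_def g2_def)
  note traj' = traj[unfolded sa_trajectory_def F, unfolded x_eq]
  have c1: "continuous_on {0..} (\<lambda>t. (P1 t, P2 t, V1 t, V2 t))"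
    using traj' by blast
  have c2: "continuous_on {0..} (\<lambda>t. (P2 t, V1 t, V2 t))"
    using continuous_on_snd[OF c1] by simp
  have c3: "continuous_on {0..} (\<lambda>t. (V1 t, V2 t))"
    using continuous_on_snd[OF c2] by simp
  have "((\<lambda>t. (P1 t, P2 t, V1 t, V2 t)) has_vector_derivative (f1 t, f2 t, g1 t, g2 t))
      (at t within {t..})" if "0 \<le> t" for t
    using traj' that by blast
  note der = has_real_derivative_components[OF this]
  show thesis
  proof (rule that[OF x_eq F])
    show "continuous_on {0..} P1" "continuous_on {0..} P2"
      "continuous_on {0..} V1" "continuous_on {0..} V2"
      using continuous_on_fst[OF c1] continuous_on_fst[OF c2]
        continuous_on_fst[OF c3] continuous_on_snd[OF c3] by simp_all
  qed (use der in simp_all)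
qed

lemma sa_trajectory_near_origin:
  fixes a b c d eps \<kappa> \<rho> w1 w2 m :: real
  assumes traj: "sa_trajectory a b c d eps x"
    and "b < c" "0 \<le> eps"
    and margin: "(c - b) / 2 * w1 + b - d \<le> - 2 * \<kappa>" "(c - b) / 2 * w2 + b - d \<le> - 2 * \<kappa>"
    and radius: "(\<bar>a + d - b - c\<bar> + (c - b) / 2) * \<rho> \<le> \<kappa>"
    and "0 \<le> m" and near: "\<And>s. 0 \<le> s \<Longrightarrow> s < m \<Longrightarrow> dist (x s) (0, 0, w1, w2) < \<rho>"
    and start: "x 0 = (p1, p2, v1, v2)" and stop: "x m = (p1', p2', v1', v2')"
  shows "p1' + p2' \<le> p1 + p2"
    and "\<bar>v1' - v1\<bar> \<le> eps * (p1 + p2 - (p1' + p2'))"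
    and "\<bar>v2' - v2\<bar> \<le> eps * (p1 + p2 - (p1' + p2'))"
proof -
  obtain P1 P2 V1 V2 f1 f2 g1 g2 where x_eq: "x = (\<lambda>t. (P1 t, P2 t, V1 t, V2 t))"
    and F: "\<And>t. sa_PF a b c d eps (x t) = (f1 t, f2 t, g1 t, g2 t)"
    and coords: "continuous_on {0..} P1" "continuous_on {0..} P2"
      "continuous_on {0..} V1" "continuous_on {0..} V2"
    and der: "\<And>t. 0 \<le> t \<Longrightarrow> (P1 has_real_derivative f1 t) (at t within {t..})"
      "\<And>t. 0 \<le> t \<Longrightarrow> (P2 has_real_derivative f2 t) (at t within {t..})"
      "\<And>t. 0 \<le> t \<Longrightarrow> (V1 has_real_derivative g1 t) (at t within {t..})"
      "\<And>t. 0 \<le> t \<Longrightarrow> (V2 has_real_derivative g2 t) (at t within {t..})"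
    using sa_trajectory_coordinates[OF traj] by blast
  have cont: "continuous_on {0..m} P1" "continuous_on {0..m} P2"
    "continuous_on {0..m} V1" "continuous_on {0..m} V2"
    using coords by (auto elim: continuous_on_subset)
  have in_box: "0 \<le> P1 s" "0 \<le> P2 s" if "0 \<le> s" for s
    using traj that by (simp_all add: sa_trajectory_def sa_box_def x_eq)
  have field: "f1 s \<le> 0" "f2 s \<le> 0" "\<bar>g1 s\<bar> \<le> eps * - (f1 s + f2 s)"
    "\<bar>g2 s\<bar> \<le> eps * - (f1 s + f2 s)" if "0 \<le> s" "s < m" for s
  proof -
    have "dist (P1 s, P2 s, V1 s, V2 s) (0, 0, w1, w2) < \<rho>"
      using near[OF that] by (simp add: x_eq)
    note near_components = abs_less_if_dist_state_less[OF this]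
    show "f1 s \<le> 0" "f2 s \<le> 0" "\<bar>g1 s\<bar> \<le> eps * - (f1 s + f2 s)" "\<bar>g2 s\<bar> \<le> eps * - (f1 s + f2 s)"
      using sa_PF_near_origin[OF \<open>b < c\<close> \<open>0 \<le> eps\<close> margin radius _ _ _ _ _ _ F[of s, unfolded x_eq]]
        in_box[OF that(1)] near_components by simp_all
  qed
  have S_cont: "continuous_on {0..m} (\<lambda>t. P1 t + P2 t)"
    using cont(1,2) by (rule continuous_on_add)
  have S_der: "((\<lambda>t. P1 t + P2 t) has_real_derivative f1 t + f2 t) (at t within {t..})"
    if "0 \<le> t" "t < m" for t
    using der(1,2)[OF that(1)] by (rule DERIV_add)
  have decay: "P1 m + P2 m \<le> P1 0 + P2 0"
  proof (rule nonincreasing_if_right_derivative_nonpos[OF \<open>0 \<le> m\<close> S_cont S_der])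
    show "f1 t + f2 t \<le> 0" if "0 \<le> t" "t < m" for t
      using field(1,2)[OF that] by simp
  qed
  have "\<bar>V m - V 0\<bar> \<le> eps * (P1 0 + P2 0) - eps * (P1 m + P2 m)"
    if V_cont: "continuous_on {0..m} V"
      and V_der: "\<And>t. 0 \<le> t \<Longrightarrow> (V has_real_derivative g t) (at t within {t..})"
      and V_dominated: "\<And>s. 0 \<le> s \<Longrightarrow> s < m \<Longrightarrow> \<bar>g s\<bar> \<le> eps * - (f1 s + f2 s)" for V g
  proof (rule abs_diff_le_if_right_derivative_dominated[OF \<open>0 \<le> m\<close> _ V_cont])
    show "continuous_on {0..m} (\<lambda>t. eps * (P1 t + P2 t))"
      using S_cont by (rule continuous_on_mult_left)
    show "((\<lambda>t. eps * (P1 t + P2 t)) has_real_derivative eps * (f1 t + f2 t)) (at t within {t..})"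
      if "0 \<le> t" "t < m" for t
      using S_der[OF that] by (rule DERIV_cmult)
    show "(V has_real_derivative g t) (at t within {t..})" if "0 \<le> t" for t
      using V_der[OF that] .
    show "\<bar>g t\<bar> \<le> - (eps * (f1 t + f2 t))" if "0 \<le> t" "t < m" for t
      using V_dominated[OF that] by (simp only: mult_minus_right)
  qed
  note drift = this[OF cont(3) der(3) field(3)] this[OF cont(4) der(4) field(4)]
  have "P1 0 = p1" "P2 0 = p2" "V1 0 = v1" "V2 0 = v2"
    "P1 m = p1'" "P2 m = p2'" "V1 m = v1'" "V2 m = v2'"
    using start stop by (simp_all add: x_eq)
  with decay drift show "p1' + p2' \<le> p1 + p2"
    and "\<bar>v1' - v1\<bar> \<le> eps * (p1 + p2 - (p1' + p2'))"
    and "\<bar>v2' - v2\<bar> \<le> eps * (p1 + p2 - (p1' + p2'))"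
    by (simp_all add: right_diff_distrib)
qed

lemma sa_trajectory_stays_near_origin:
  fixes a b c d eps \<kappa> \<rho> \<delta> w1 w2 t :: real
  assumes traj: "sa_trajectory a b c d eps x"
    and "b < c" "0 \<le> eps"
    and margin: "(c - b) / 2 * w1 + b - d \<le> - 2 * \<kappa>" "(c - b) / 2 * w2 + b - d \<le> - 2 * \<kappa>"
    and radius: "(\<bar>a + d - b - c\<bar> + (c - b) / 2) * \<rho> \<le> \<kappa>"
    and "(4 * eps + 4) * \<delta> \<le> \<rho>" and close: "dist (x 0) (0, 0, w1, w2) < \<delta>"
    and "0 \<le> t"
  shows "dist (x t) (0, 0, w1, w2) < \<rho>"
proof -
  have \<rho>_bound: "4 * \<delta> + 2 * (eps * (2 * \<delta>)) \<le> \<rho>"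
    using \<open>(4 * eps + 4) * \<delta> \<le> \<rho>\<close> by (simp add: algebra_simps)
  have in_box: "x s \<in> sa_box" if "0 \<le> s" for s
    using traj that by (simp add: sa_trajectory_def)
  obtain p1 p2 v1 v2 where start: "x 0 = (p1, p2, v1, v2)" by (cases "x 0" rule: prod_cases4)
  have p: "0 \<le> p1" "0 \<le> p2"
    using in_box[of 0] start by (simp_all add: sa_box_def)
  have start_close: "\<bar>p1\<bar> < \<delta>" "\<bar>p2\<bar> < \<delta>" "\<bar>v1 - w1\<bar> < \<delta>" "\<bar>v2 - w2\<bar> < \<delta>"
    using abs_less_if_dist_state_less[of p1 p2 v1 v2 0 0 w1 w2 \<delta>] close start by simp_all
  have "x t \<in> ball (0, 0, w1, w2) \<rho>"
  proof (rule mem_if_no_first_exit[OF _ open_ball _ \<open>0 \<le> t\<close>])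
    show "continuous_on {0..} x" using traj by (simp add: sa_trajectory_def)
    fix m
    assume "0 \<le> m" and before: "\<And>s. 0 \<le> s \<Longrightarrow> s < m \<Longrightarrow> x s \<in> ball (0, 0, w1, w2) \<rho>"
    obtain p1' p2' v1' v2' where stop: "x m = (p1', p2', v1', v2')" by (cases "x m" rule: prod_cases4)
    have p': "0 \<le> p1'" "0 \<le> p2'"
      using in_box[OF \<open>0 \<le> m\<close>] stop by (simp_all add: sa_box_def)
    have "dist (x s) (0, 0, w1, w2) < \<rho>" if "0 \<le> s" "s < m" for s
      using before[OF that] by (simp add: dist_commute)
    note estimate = sa_trajectory_near_origin[OF traj \<open>b < c\<close> \<open>0 \<le> eps\<close> margin radius
        \<open>0 \<le> m\<close> this start stop]
    have "eps * (p1 + p2 - (p1' + p2')) \<le> eps * (2 * \<delta>)"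
      using start_close p p' \<open>0 \<le> eps\<close> by (intro mult_left_mono) simp_all
    then have "\<bar>p1' - 0\<bar> + \<bar>p2' - 0\<bar> + \<bar>v1' - w1\<bar> + \<bar>v2' - w2\<bar> < \<rho>"
      using estimate start_close p p' \<rho>_bound by linarith
    then have "dist (x m) (0, 0, w1, w2) < \<rho>"
      unfolding stop by (rule le_less_trans[OF dist_state_le])
    then show "x m \<in> ball (0, 0, w1, w2) \<rho>" by (simp add: dist_commute)
  qed
  then show ?thesis by (simp add: dist_commute)
qed

lemma sa_stable_origin:
  fixes a b c d eps w1 w2 :: real
  assumes "b < c" "0 \<le> eps"
    and "(c - b) / 2 * w1 + b - d < 0" "(c - b) / 2 * w2 + b - d < 0"
  shows "sa_stable a b c d eps (0, 0, w1, w2)"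
  unfolding sa_stable_def
proof (intro allI impI)
  fix \<eta> :: real
  assume "0 < \<eta>"
  define D where "D = \<bar>a + d - b - c\<bar> + (c - b) / 2"
  define \<kappa> where "\<kappa> = min (- ((c - b) / 2 * w1 + b - d)) (- ((c - b) / 2 * w2 + b - d)) / 2"
  define \<rho> where "\<rho> = min \<eta> (\<kappa> / D)"
  define \<delta> where "\<delta> = \<rho> / (4 * eps + 4)"
  have "0 < \<kappa>" using assms(3,4) by (simp add: \<kappa>_def)
  have margin: "(c - b) / 2 * w1 + b - d \<le> - 2 * \<kappa>" "(c - b) / 2 * w2 + b - d \<le> - 2 * \<kappa>"
    by (simp_all add: \<kappa>_def)
  have "0 < D" using \<open>b < c\<close> by (simp add: D_def add_nonneg_pos)
  have "\<rho> \<le> \<kappa> / D" "\<rho> \<le> \<eta>" by (simp_all add: \<rho>_def)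
  then have radius: "D * \<rho> \<le> \<kappa>"
    using \<open>0 < D\<close> by (simp add: pos_le_divide_eq mult.commute)
  have "0 < \<rho>" using \<open>0 < \<eta>\<close> \<open>0 < \<kappa>\<close> \<open>0 < D\<close> by (simp add: \<rho>_def)
  moreover have "0 < 4 * eps + 4" using \<open>0 \<le> eps\<close> by simp
  ultimately have "0 < \<delta>" "(4 * eps + 4) * \<delta> \<le> \<rho>"
    by (simp_all add: \<delta>_def)
  with \<open>\<rho> \<le> \<eta>\<close> show "\<exists>\<delta>>0. \<forall>x. sa_trajectory a b c d eps x \<and> dist (x 0) (0, 0, w1, w2) < \<delta> \<longrightarrow>
      (\<forall>t\<ge>0. dist (x t) (0, 0, w1, w2) < \<eta>)"
    using sa_trajectory_stays_near_origin[OF _ \<open>b < c\<close> \<open>0 \<le> eps\<close> margin radius[unfolded D_def]]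
    by (meson order_less_le_trans)
qed

definition sa_reflect :: "state \<Rightarrow> state" where
  "sa_reflect x = (1, 1, 1, 1) - x"

lemma dist_sa_reflect: "dist (sa_reflect x) (sa_reflect y) = dist x y"
  by (simp add: sa_reflect_def dist_norm norm_minus_commute)

lemma clip_one_minus: "clip (1 - y) f = - clip y (- f)"
  by (auto simp: clip_def)

lemma sa_PF_reflect:
  "sa_PF (d + (c - b) / 2) b c (a - (c - b) / 2) eps (sa_reflect x) = - sa_PF a b c d eps x"
proof (cases x rule: prod_cases4)
  case (fields p1 p2 v1 v2)
  have p_field: "(d + (c - b) / 2 + (a - (c - b) / 2) - b - c) * (1 - p) + (c - b) / 2 * (1 - v)
      + b - (a - (c - b) / 2) = - ((a + d - b - c) * p + (c - b) / 2 * v + b - d)" for p v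
    by (simp add: field_simps)
  have w_field: "eps / 2 * (b - c) * (1 - p - (1 - q)) = - (eps / 2 * (b - c) * (p - q))" for p q
    by (simp flip: mult_minus_right)
  have reflect: "sa_reflect (p1, p2, v1, v2) = (1 - p1, 1 - p2, 1 - v1, 1 - v2)"
    by (simp add: sa_reflect_def)
  show ?thesis
    unfolding fields reflect sa_PF_eq p_field w_field clip_one_minus minus_minus by simp
qed

lemma sa_trajectory_reflect:
  assumes "sa_trajectory a b c d eps x"
  shows "sa_trajectory (d + (c - b) / 2) b c (a - (c - b) / 2) eps (\<lambda>t. sa_reflect (x t))"
proof -
  have box: "\<And>t. 0 \<le> t \<Longrightarrow> x t \<in> sa_box" and cont: "continuous_on {0..} x"
    and der: "\<And>t. 0 \<le> t \<Longrightarrow> (x has_vector_derivative sa_PF a b c d eps (x t)) (at t within {t..})"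
    using assms by (simp_all add: sa_trajectory_def)
  have "sa_reflect y \<in> sa_box" if "y \<in> sa_box" for y
    using that by (cases y rule: prod_cases4) (simp add: sa_box_def sa_reflect_def)
  moreover have "continuous_on {0..} (\<lambda>t. sa_reflect (x t))"
    unfolding sa_reflect_def by (intro continuous_intros cont)
  moreover have "((\<lambda>t. sa_reflect (x t)) has_vector_derivative - sa_PF a b c d eps (x t))
      (at t within {t..})" if "0 \<le> t" for t
    using has_vector_derivative_diff[OF has_vector_derivative_const der[OF that]]
    by (simp add: sa_reflect_def)
  ultimately show ?thesis
    using box by (simp add: sa_trajectory_def sa_PF_reflect)
qed

lemma sa_stable_if_sa_stable_reflect:
  assumes "sa_stable (d + (c - b) / 2) b c (a - (c - b) / 2) eps (sa_reflect xs)"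
  shows "sa_stable a b c d eps xs"
  unfolding sa_stable_def
proof (intro allI impI)
  fix \<eta> :: real
  assume "0 < \<eta>"
  with assms obtain \<delta> where "0 < \<delta>" and \<delta>:
    "\<And>y t. sa_trajectory (d + (c - b) / 2) b c (a - (c - b) / 2) eps y \<Longrightarrow>
      dist (y 0) (sa_reflect xs) < \<delta> \<Longrightarrow> 0 \<le> t \<Longrightarrow> dist (y t) (sa_reflect xs) < \<eta>"
    unfolding sa_stable_def by blast
  show "\<exists>\<delta>>0. \<forall>x. sa_trajectory a b c d eps x \<and> dist (x 0) xs < \<delta> \<longrightarrow>
      (\<forall>t\<ge>0. dist (x t) xs < \<eta>)"
    using \<open>0 < \<delta>\<close> \<delta>[OF sa_trajectory_reflect] by (auto simp: dist_sa_reflect)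
qed

theorem corollary1:
  fixes a b c d eps w1 w2 :: real
  assumes pd: "c > a" "a > d" "d > b"
    and eps: "eps > 0"
    and w: "w1 \<in> {0..1}" "w2 \<in> {0..1}"
  shows "(w1 < min (2 * (c - a) / (c - b)) (2 * (d - b) / (c - b)) \<and>
          w2 < min (2 * (c - a) / (c - b)) (2 * (d - b) / (c - b)) \<longrightarrow>
            sa_equilibrium a b c d eps (0, 0, w1, w2) \<and> sa_stable a b c d eps (0, 0, w1, w2))
       \<and> (w1 > max (2 * (c - a) / (c - b)) (2 * (d - b) / (c - b)) \<and>
          w2 > max (2 * (c - a) / (c - b)) (2 * (d - b) / (c - b)) \<longrightarrow>
            sa_equilibrium a b c d eps (1, 1, w1, w2) \<and> sa_stable a b c d eps (1, 1, w1, w2))"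
proof -
  have "b < c" using pd by linarith
  then have low: "(c - b) / 2 * v + b - d < 0 \<longleftrightarrow> v < 2 * (d - b) / (c - b)"
    and high: "0 < (a + d - b - c) + (c - b) / 2 * v + b - d \<longleftrightarrow> 2 * (c - a) / (c - b) < v"
    for v
    by (simp_all add: field_simps)
  have "(c - b) / 2 * (1 - v) + b - (a - (c - b) / 2) = - ((a + d - b - c) + (c - b) / 2 * v + b - d)"
    for v
    by (simp add: field_simps)
  then have high_reflect: "(c - b) / 2 * (1 - v) + b - (a - (c - b) / 2) < 0 \<longleftrightarrow> 2 * (c - a) / (c - b) < v"
    for v
    by (simp only: neg_less_0_iff_less high)
  have "sa_equilibrium a b c d eps (0, 0, w1, w2) \<and> sa_stable a b c d eps (0, 0, w1, w2)"
    if "w1 < 2 * (d - b) / (c - b)" "w2 < 2 * (d - b) / (c - b)"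
  proof
    show "sa_equilibrium a b c d eps (0, 0, w1, w2)"
      using that w low by (simp add: sa_equilibrium_def sa_box_def sa_PF_eq clip_def zero_prod_def)
    show "sa_stable a b c d eps (0, 0, w1, w2)"
      using \<open>b < c\<close> less_imp_le[OF eps] that[folded low] by (rule sa_stable_origin)
  qed
  moreover have "sa_equilibrium a b c d eps (1, 1, w1, w2) \<and> sa_stable a b c d eps (1, 1, w1, w2)"
    if "2 * (c - a) / (c - b) < w1" "2 * (c - a) / (c - b) < w2"
  proof
    show "sa_equilibrium a b c d eps (1, 1, w1, w2)"
      using that w high by (simp add: sa_equilibrium_def sa_box_def sa_PF_eq clip_def zero_prod_def)
    have "sa_stable (d + (c - b) / 2) b c (a - (c - b) / 2) eps (0, 0, 1 - w1, 1 - w2)"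
      using \<open>b < c\<close> less_imp_le[OF eps] that[folded high_reflect] by (rule sa_stable_origin)
    moreover have "sa_reflect (1, 1, w1, w2) = (0, 0, 1 - w1, 1 - w2)"
      by (simp add: sa_reflect_def)
    ultimately show "sa_stable a b c d eps (1, 1, w1, w2)"
      by (metis sa_stable_if_sa_stable_reflect)
  qed
  ultimately show ?thesis
    by (simp only: min_less_iff_conj max_less_iff_conj) blast
qed

end
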